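(* Let $\lambda^\pm>0$, $\mu^\pm>0$, $\hat\lambda=\lambda^+-\lambda^-$, $\hat\mu=\mu^+-\mu^-$, and let $g_n,g_t\in\mathbb R$ satisfy $g_n\in[0,1]$, $(1-g_n)^2-g_t^2\ge0$ and $g_n^2-g_t^2\ge0$. Then the matrix $$\Xi=\begin{bmatrix}\lambda^-+2\mu^-&0\\0&\mu^-\end{bmatrix}+\begin{bmatrix}(\hat\lambda+2\hat\mu)g_n&\hat\lambda g_t\\ \hat\mu g_t&\hat\mu g_n\end{bmatrix}$$ satisfies $\det\Xi>2\big(\min\{\mu^+,\mu^-\}\big)^2$.
   Context: In the paper $g_n=g_n(F_0)$, $g_t=g_t(F_0)$ are the values at a specially chosen point $F_0$ of the auxiliary functions $g_n(X)=\sum_{i\in\mathcal I^-}L(A_i)\nabla\psi_i(X)\cdot\bar{\mathbf n}$, $g_t(X)=\sum_{i\in\mathcal I^-}L(A_i)\nabla\psi_i(X)\cdot\bar{\mathbf t}$ on a rectangular interface element; the statement above is the algebraic content, with the inequalities on $g_n,g_t$ as hypotheses. *)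

theory Defs
  imports "HOL-Analysis.Analysis"
begin

end

theory Submission
  imports Defs
begin

text \<open>Write \<open>a = 1 - g\<^sub>n\<close> and \<open>b = g\<^sub>n\<close>. Expanding the determinant and using \<open>a + b = 1\<close> gives
  \<open>det \<Xi> = 2 (\<mu>\<^sup>- a + \<mu>\<^sup>+ b)\<^sup>2 + \<lambda>\<^sup>-\<mu>\<^sup>-(a\<^sup>2 - g\<^sub>t\<^sup>2) + \<lambda>\<^sup>+\<mu>\<^sup>+(b\<^sup>2 - g\<^sub>t\<^sup>2) + (\<lambda>\<^sup>-\<mu>\<^sup>+ + \<lambda>\<^sup>+\<mu>\<^sup>-)(a b + g\<^sub>t\<^sup>2)\<close>.
  The last three terms are nonnegative and cannot all vanish, and the convex combination
  \<open>\<mu>\<^sup>- a + \<mu>\<^sup>+ b\<close> is at least \<open>min \<mu>\<^sup>+ \<mu>\<^sup>-\<close>.\<close>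

lemma vector_2x2_add:
  fixes a b c d a' b' c' d' :: "'a::monoid_add"
  shows "(vector [vector [a, b], vector [c, d]] :: 'a^2^2) + vector [vector [a', b'], vector [c', d']]
       = vector [vector [a + a', b + b'], vector [c + c', d + d']]"
  by (simp add: vec_eq_iff forall_2 vector_2)

lemma det_vector_2x2:
  fixes a b c d :: "'a::comm_ring_1"
  shows "det (vector [vector [a, b], vector [c, d]] :: 'a^2^2) = a * d - b * c"
  by (simp add: det_2 vector_2)

lemma min_le_convex_combination:
  fixes x y s :: real
  assumes "0 \<le> s" "s \<le> 1"
  shows "min x y \<le> (1 - s) * x + s * y"
proof -
  have "(1 - s) * min x y \<le> (1 - s) * x" "s * min x y \<le> s * y"
    using assms by (simp_all add: mult_left_mono)
  then show ?thesis by (simp add: algebra_simps)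
qed

lemma det_interface_matrix_eq:
  fixes lp lm mp mm g t :: real
  shows "det ((vector [vector [lm + 2*mm, 0], vector [0, mm]] :: real^2^2)
             + vector [vector [((lp - lm) + 2*(mp - mm)) * g, (lp - lm) * t],
                       vector [(mp - mm) * t, (mp - mm) * g]])
       = 2 * (mm*(1 - g) + mp*g)^2
         + (lm*mm*((1 - g)^2 - t^2) + lp*mp*(g^2 - t^2) + (lm*mp + lp*mm)*((1 - g)*g + t^2))"
  unfolding vector_2x2_add det_vector_2x2 by algebra

lemma interface_remainder_pos:
  fixes lp lm mp mm a b t :: real
  assumes "lp > 0" "lm > 0" "mp > 0" "mm > 0"
    and "a \<ge> 0" "b \<ge> 0" "a + b = 1"
    and "t^2 \<le> a^2" "t^2 \<le> b^2"
  shows "lm*mm*(a^2 - t^2) + lp*mp*(b^2 - t^2) + (lm*mp + lp*mm)*(a*b + t^2) > 0"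
proof -
  have first: "lm*mm*(a^2 - t^2) \<ge> 0" and second: "lp*mp*(b^2 - t^2) \<ge> 0"
    using assms by simp_all
  have cross_coeff: "lm*mp + lp*mm > 0"
    using assms by (simp add: add_pos_pos)
  show ?thesis
  proof (cases "a*b + t^2 > 0")
    case True
    then show ?thesis using first second cross_coeff by (simp add: add_nonneg_pos)
  next
    case False
    moreover have "a*b \<ge> 0" using assms by simp
    ultimately have "a*b = 0" "t = 0" by (smt (verit) zero_le_power2 power_eq_0_iff)+
    then have "(a = 0 \<and> b = 1) \<or> (a = 1 \<and> b = 0)" using \<open>a + b = 1\<close> by auto
    then show ?thesis using \<open>t = 0\<close> assms by auto
  qed
qed

theorem mainTheorem10:
  fixes lp lm mp mm gn gt :: real
  assumes "lp > 0" and "lm > 0" and "mp > 0" and "mm > 0"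
    and "0 \<le> gn" and "gn \<le> 1"
    and "(1 - gn)^2 - gt^2 \<ge> 0"
    and "gn^2 - gt^2 \<ge> 0"
  shows "det ((vector [vector [lm + 2*mm, 0], vector [0, mm]] :: real^2^2)
             + vector [vector [((lp - lm) + 2*(mp - mm)) * gn, (lp - lm) * gt],
                       vector [(mp - mm) * gt, (mp - mm) * gn]])
         > 2 * (min mp mm)^2"
proof -
  let ?c = "mm * (1 - gn) + mp * gn"
  have "min mp mm \<le> ?c"
    using min_le_convex_combination[of gn mm mp] assms by (simp add: min.commute mult.commute)
  moreover have "0 \<le> min mp mm" using assms by simp
  ultimately have "(min mp mm)^2 \<le> ?c^2" by (simp add: power_mono)
  moreover have "lm*mm*((1 - gn)^2 - gt^2) + lp*mp*(gn^2 - gt^2)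
                 + (lm*mp + lp*mm)*((1 - gn)*gn + gt^2) > 0"
    using assms by (intro interface_remainder_pos) auto
  ultimately show ?thesis
    unfolding det_interface_matrix_eq by linarith
qed

end
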